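(* There is a constant $C_t>0$, independent of $h$, such that for all $\phi\in E_h(\Omega)$, all $T\in\mathcal T_h$ and every edge $e$ of $T$ (with $\nabla\phi$ taken as the gradient of $\phi|_T$), $$\|\beta\nabla\phi\cdot\mathbf n_e\|_{L^2(e)}^2\le C_t\,h^{-1}\,\|\beta\nabla\phi\|_{L^2(T)}^2.$$
   Context: Let $\Omega\subset\mathbb R^2$ be a convex polygonal domain, $\Omega=\Omega_1\cup\Gamma\cup\Omega_2$ with $\Omega_1,\Omega_2$ (also written $\Omega^-,\Omega^+$) disjoint open subdomains separated by a $C^2$ interface curve $\Gamma$. The coefficient $\beta$ satisfies $\beta|_{\Omega_i}\in C^1(\Omega_i)$ and $0<\underline\beta<\beta<\overline\beta$. Mesh: $\mathcal T_h$ is a regular triangulation of $\Omega$ of mesh size $h$, not necessarily aligned with $\Gamma$; triangles cut by $\Gamma$ are interface elements. Each edge $e$ carries a fixed unit normal $\mathbf n_e$. IFEM space: on a non-interface triangle $S_h(T)=\mathcal P^1(T)$. An interface triangle $T$ with vertices $A_1,A_2,A_3$ is divided by the interface (represented in $T$ by the segment joining the two points where $\Gamma$ crosses $\partial T$) into $T^+\subset\Omega^+$, $T^-\subset\Omega^-$, and $\widehat S_h(T)=\mathrm{span}\{\hat\lambda_1,\hat\lambda_2,\hat\lambda_3\}$, where $\hat\lambda_j$ is the unique function linear on each of $T^\pm$ with $\hat\lambda_j(A_i)=\delta_{ij}$ that is continuous and has continuous $\beta\nabla\hat\lambda_j\cdot\mathbf n_\Gamma$ across the interface ($\mathbf n_\Gamma$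 the unit normal to the interface). $\widehat S_h(\Omega)$ consists of the functions $\phi$ with $\phi|_T\in S_h(T)$ (non-interface $T$) or $\phi|_T\in\widehat S_h(T)$ (interface $T$), single-valued at mesh vertices and vanishing at vertices on $\partial\Omega$. $C_h(\Omega)$ is the space of piecewise constants on $\mathcal T_h$, and $E_h(\Omega)=\widehat S_h(\Omega)+C_h(\Omega)$. *)

theory Defs
  imports "HOL-Analysis.Analysis"
begin

type_synonym pt = "real^2"

definition convex_polygonal_domain :: "pt set \<Rightarrow> bool" where
  "convex_polygonal_domain \<Omega> \<longleftrightarrow> \<Omega> \<noteq> {} \<and> (\<exists>P. finite P \<and> \<Omega> = interior (convex hull P))"

definition C1_on :: "pt set \<Rightarrow> (pt \<Rightarrow> real) \<Rightarrow> bool" where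
  "C1_on S f \<longleftrightarrow> (\<exists>g :: pt \<Rightarrow> pt. continuous_on S g \<and>
      (\<forall>x\<in>S. (f has_derivative (\<lambda>v. g x \<bullet> v)) (at x)))"

definition C2_interface :: "pt set \<Rightarrow> pt set \<Rightarrow> bool" where
  "C2_interface \<Omega> \<Gamma> \<longleftrightarrow> (\<exists>(\<gamma>::real \<Rightarrow> pt) \<gamma>' \<gamma>''. simple_path \<gamma> \<and>
      (\<forall>t\<in>{0..1}. (\<gamma> has_vector_derivative \<gamma>' t) (at t within {0..1}) \<and>
                 (\<gamma>' has_vector_derivative \<gamma>'' t) (at t within {0..1}) \<and> \<gamma>' t \<noteq> 0) \<and>
      continuous_on {0..1} \<gamma>'' \<and> \<Gamma> = path_image \<gamma> \<inter> \<Omega>)"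

text \<open>A triangle is given by its set of three (non-collinear) vertices K; the element is convex hull K.
  A (conforming) triangulation of Omega.\<close>
definition triangulation :: "pt set \<Rightarrow> pt set set \<Rightarrow> bool" where
  "triangulation \<Omega> \<T> \<longleftrightarrow> finite \<T> \<and> \<T> \<noteq> {} \<and>
     (\<forall>K\<in>\<T>. card K = 3 \<and> \<not> collinear K) \<and>
     \<Union>((\<lambda>K. convex hull K) ` \<T>) = closure \<Omega> \<and>
     (\<forall>K\<in>\<T>. \<forall>K'\<in>\<T>. K \<noteq> K' \<longrightarrow> convex hull K \<inter> convex hull K' = convex hull (K \<inter> K'))"

definition meshsize :: "pt set set \<Rightarrow> real" where
  "meshsize \<T> = Max ((\<lambda>K. diameter (convex hull K)) ` \<T>)"

definition inradius :: "pt set \<Rightarrow> real" where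
  "inradius K = Sup {r. \<exists>c. ball c r \<subseteq> convex hull K}"

definition interface_elem :: "pt set \<Rightarrow> pt set \<Rightarrow> bool" where
  "interface_elem \<Gamma> K \<longleftrightarrow> \<Gamma> \<inter> interior (convex hull K) \<noteq> {}"

text \<open>Admissible mesh of a regular (shape regular and quasi-uniform, parameter sigma) family;
  cutp K = the two points where Gamma crosses the boundary of an interface element K.\<close>
definition admissible_mesh :: "pt set \<Rightarrow> pt set \<Rightarrow> real \<Rightarrow> pt set set \<Rightarrow> (pt set \<Rightarrow> pt \<times> pt) \<Rightarrow> bool" where
  "admissible_mesh \<Omega> \<Gamma> \<sigma> \<T> cutp \<longleftrightarrow> triangulation \<Omega> \<T> \<and>
     (\<forall>K\<in>\<T>. meshsize \<T> \<le> \<sigma> * inradius K) \<and>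
     (\<forall>K\<in>\<T>. interface_elem \<Gamma> K \<longrightarrow>
        fst (cutp K) \<noteq> snd (cutp K) \<and>
        closure \<Gamma> \<inter> frontier (convex hull K) = {fst (cutp K), snd (cutp K)} \<and>
        open_segment (fst (cutp K)) (snd (cutp K)) \<subseteq> interior (convex hull K))"

definition perp :: "pt \<Rightarrow> pt" where
  "perp v = vector [- (v$2), v$1]"

definition P1_local :: "pt set \<Rightarrow> (pt \<Rightarrow> real) \<Rightarrow> bool" where
  "P1_local K v \<longleftrightarrow> (\<exists>g c. \<forall>x\<in>convex hull K. v x = g \<bullet> x + c)"

definition IFE_local :: "pt set \<Rightarrow> pt \<Rightarrow> pt \<Rightarrow> real \<Rightarrow> real \<Rightarrow> (pt \<Rightarrow> real) \<Rightarrow> bool" where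
  "IFE_local K D E b1 b2 v \<longleftrightarrow> (let \<nu> = perp (E - D) in
     \<exists>g1 c1 g2 c2.
       (\<forall>x\<in>convex hull K. (x - D) \<bullet> \<nu> \<ge> 0 \<longrightarrow> v x = g1 \<bullet> x + c1) \<and>
       (\<forall>x\<in>convex hull K. (x - D) \<bullet> \<nu> \<le> 0 \<longrightarrow> v x = g2 \<bullet> x + c2) \<and>
       (\<forall>x. (x - D) \<bullet> \<nu> = 0 \<longrightarrow> g1 \<bullet> x + c1 = g2 \<bullet> x + c2) \<and>
       b1 * (g1 \<bullet> \<nu>) = b2 * (g2 \<bullet> \<nu>))"

text \<open>Global IFE space hat S_h: a function is a family of local functions, one per element.\<close>
definition IFE_space :: "pt set \<Rightarrow> pt set \<Rightarrow> pt set set \<Rightarrow> (pt set \<Rightarrow> pt \<times> pt) \<Rightarrow> (pt set \<Rightarrow> bool \<Rightarrow> real)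
      \<Rightarrow> (pt set \<Rightarrow> pt \<Rightarrow> real) set" where
  "IFE_space \<Omega> \<Gamma> \<T> cutp bc = {\<psi>.
     (\<forall>K\<in>\<T>. if interface_elem \<Gamma> K
               then IFE_local K (fst (cutp K)) (snd (cutp K)) (bc K True) (bc K False) (\<psi> K)
               else P1_local K (\<psi> K)) \<and>
     (\<forall>K\<in>\<T>. \<forall>K'\<in>\<T>. \<forall>a\<in>K \<inter> K'. \<psi> K a = \<psi> K' a) \<and>
     (\<forall>K\<in>\<T>. \<forall>a\<in>K. a \<in> frontier \<Omega> \<longrightarrow> \<psi> K a = 0)}"

definition E_space :: "pt set \<Rightarrow> pt set \<Rightarrow> pt set set \<Rightarrow> (pt set \<Rightarrow> pt \<times> pt) \<Rightarrow> (pt set \<Rightarrow> bool \<Rightarrow> real)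
      \<Rightarrow> (pt set \<Rightarrow> pt \<Rightarrow> real) set" where
  "E_space \<Omega> \<Gamma> \<T> cutp bc = {\<phi>. \<exists>\<psi>\<in>IFE_space \<Omega> \<Gamma> \<T> cutp bc. \<exists>c :: pt set \<Rightarrow> real.
       \<forall>K\<in>\<T>. \<forall>x\<in>convex hull K. \<phi> K x = \<psi> K x + c K}"

text \<open>Gradient of v at an interior point, and gradient of v restricted to the element K,
  extended to the closed element by taking limits from the interior.\<close>
definition grad :: "(pt \<Rightarrow> real) \<Rightarrow> pt \<Rightarrow> pt" where
  "grad v y = (\<chi> i. frechet_derivative v (at y) (axis i 1))"

definition gradT :: "pt set \<Rightarrow> (pt \<Rightarrow> real) \<Rightarrow> pt \<Rightarrow> pt" where
  "gradT K v x = Lim (at x within {y \<in> interior (convex hull K). v differentiable (at y)}) (grad v)"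

definition L2sq_elem :: "pt set \<Rightarrow> (pt \<Rightarrow> pt) \<Rightarrow> real" where
  "L2sq_elem K f = integral (convex hull K) (\<lambda>x. (norm (f x))\<^sup>2)"

definition L2sq_edge :: "pt \<Rightarrow> pt \<Rightarrow> (pt \<Rightarrow> real) \<Rightarrow> real" where
  "L2sq_edge a b f = dist a b * integral {0..1} (\<lambda>t. (f (a + t *\<^sub>R (b - a)))\<^sup>2)"

end

theory Submission
  imports Defs
begin

text \<open>On an element K the function \<phi>|K is affine on either side of the straight cut, so its
  gradient takes only two values g1, g2. Continuity of \<phi> across the cut forces g1 - g2 to be
  normal to it, and flux continuity makes the normal components agree up to the coefficient
  ratio, so |g1| and |g2| are comparable up to the factor \<beta>hi/\<beta>lo. Since the cut passes through
  the interior of K, it meets the edge in at most one point; hence the edge integrand is at most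
  \<beta>hi^2 max |gi|^2 on a segment of length at most h, while the element integrand is at least
  \<beta>lo^2 min |gi|^2 on an area at least \<pi> (h/\<sigma>)^2 by shape regularity.\<close>

section \<open>Gradients of functions affine on both sides of a line\<close>

lemma grad_eq_affine_on_open:
  assumes "open U" "y \<in> U" "\<And>z. z \<in> U \<Longrightarrow> v z = g \<bullet> z + c"
  shows "v differentiable (at y)" "grad v y = g"
proof -
  have "((\<lambda>z. g \<bullet> z + c) has_derivative (\<lambda>h. g \<bullet> h)) (at y)"
    by (auto intro!: derivative_eq_intros)
  then have d: "(v has_derivative (\<lambda>h. g \<bullet> h)) (at y)"
    by (rule has_derivative_transform_within_open[OF _ assms(1,2)]) (use assms(3) in auto)
  then show "v differentiable (at y)"
    unfolding differentiable_def by blast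
  have "frechet_derivative v (at y) = (\<lambda>h. g \<bullet> h)"
    using frechet_derivative_at[OF d] by simp
  then show "grad v y = g"
    unfolding grad_def by (simp add: vec_eq_iff inner_axis)
qed

lemma gradT_eq_on_side:
  fixes l v :: "pt \<Rightarrow> real"
  assumes "finite K" "interior (convex hull K) \<noteq> {}" "continuous_on UNIV l"
    and "x \<in> convex hull K" "l x > 0"
    and "\<And>y. y \<in> interior (convex hull K) \<Longrightarrow> l y > 0 \<Longrightarrow> v y = g \<bullet> y + c"
  shows "gradT K v x = g"
proof -
  define T where "T = convex hull K"
  define S where "S = {y \<in> interior T. v differentiable (at y)}"
  define W where "W = {y. l y > 0}"
  define U where "U = interior T \<inter> W"
  have "open W"
    unfolding W_def using assms(3) by (simp add: open_Collect_less continuous_on_const)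
  then have "open U"
    unfolding U_def by auto
  have grad_U: "v differentiable (at y) \<and> grad v y = g" if "y \<in> U" for y
    using grad_eq_affine_on_open[OF \<open>open U\<close> that, of v g c] assms(6)
    unfolding U_def W_def T_def by auto
  then have "U \<subseteq> S"
    unfolding S_def U_def by auto
  have "eventually (\<lambda>y. grad v y = g) (at x within S)"
    unfolding eventually_at_topological
    using \<open>open W\<close> assms(5) grad_U by (intro exI[of _ W]) (auto simp: W_def S_def U_def)
  moreover have "closure (interior T) = T"
    using convex_closure_interior[of T] assms(1,2)
    by (simp add: T_def convex_convex_hull compact_convex_hull finite_imp_compact compact_imp_closed)
  then have "x \<in> closure U"
    using assms(4,5) open_Int_closure_subset[OF \<open>open W\<close>, of "interior T"]
    unfolding U_def T_def W_def by (auto simp: Int_commute)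
  then have "x islimpt S"
    using \<open>open U\<close> \<open>U \<subseteq> S\<close> interior_limit_point[of x U] islimpt_subset
    by (auto simp: closure_def interior_open)
  then have "\<not> trivial_limit (at x within S)"
    by (simp add: trivial_limit_within)
  ultimately show ?thesis
    unfolding gradT_def T_def[symmetric] S_def[symmetric] by (metis tendsto_Lim tendsto_eventually)
qed

definition affine_on_sides :: "pt set \<Rightarrow> pt \<Rightarrow> real \<Rightarrow> pt \<Rightarrow> pt \<Rightarrow> (pt \<Rightarrow> real) \<Rightarrow> bool" where
  "affine_on_sides T w k g1 g2 v \<longleftrightarrow> (\<exists>c1 c2. \<forall>x\<in>T.
     (w \<bullet> x + k > 0 \<longrightarrow> v x = g1 \<bullet> x + c1) \<and> (w \<bullet> x + k < 0 \<longrightarrow> v x = g2 \<bullet> x + c2))"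

definition constant_on_sides :: "pt set \<Rightarrow> pt \<Rightarrow> real \<Rightarrow> 'a \<Rightarrow> 'a \<Rightarrow> (pt \<Rightarrow> 'a) \<Rightarrow> bool" where
  "constant_on_sides T w k g1 g2 G \<longleftrightarrow>
     (\<forall>x\<in>T. (w \<bullet> x + k > 0 \<longrightarrow> G x = g1) \<and> (w \<bullet> x + k < 0 \<longrightarrow> G x = g2))"

lemma affine_on_sides_add_const:
  assumes "affine_on_sides T w k g1 g2 v" "\<And>x. x \<in> T \<Longrightarrow> u x = v x + c"
  shows "affine_on_sides T w k g1 g2 u"
proof -
  obtain c1 c2 where "\<forall>x\<in>T. (w \<bullet> x + k > 0 \<longrightarrow> v x = g1 \<bullet> x + c1) \<and> (w \<bullet> x + k < 0 \<longrightarrow> v x = g2 \<bullet> x + c2)"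
    using assms(1) unfolding affine_on_sides_def by blast
  then have "\<forall>x\<in>T. (w \<bullet> x + k > 0 \<longrightarrow> u x = g1 \<bullet> x + (c1 + c))
      \<and> (w \<bullet> x + k < 0 \<longrightarrow> u x = g2 \<bullet> x + (c2 + c))"
    using assms(2) by auto
  then show ?thesis
    unfolding affine_on_sides_def by blast
qed

lemma gradT_constant_on_sides:
  assumes "finite K" "interior (convex hull K) \<noteq> {}" "affine_on_sides (convex hull K) w k g1 g2 v"
  shows "constant_on_sides (convex hull K) w k g1 g2 (gradT K v)"
proof -
  obtain c1 c2 where v: "\<forall>x\<in>convex hull K.
      (w \<bullet> x + k > 0 \<longrightarrow> v x = g1 \<bullet> x + c1) \<and> (w \<bullet> x + k < 0 \<longrightarrow> v x = g2 \<bullet> x + c2)"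
    using assms(3) unfolding affine_on_sides_def by blast
  have pos: "gradT K v x = g1" if "x \<in> convex hull K" "w \<bullet> x + k > 0" for x
    by (rule gradT_eq_on_side[OF assms(1,2), where l = "\<lambda>y. w \<bullet> y + k" and c = c1])
       (use that v interior_subset[of "convex hull K"] in \<open>auto intro!: continuous_intros\<close>)
  have neg: "gradT K v x = g2" if "x \<in> convex hull K" "w \<bullet> x + k < 0" for x
    by (rule gradT_eq_on_side[OF assms(1,2), where l = "\<lambda>y. - (w \<bullet> y + k)" and c = c2])
       (use that v interior_subset[of "convex hull K"] in \<open>auto intro!: continuous_intros\<close>)
  show ?thesis
    unfolding constant_on_sides_def using pos neg by blast
qed

lemma constant_on_sides_cases:
  assumes "constant_on_sides T w k g1 g2 G" "x \<in> T" "w \<bullet> x + k \<noteq> 0"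
  obtains "G x = g1" | "G x = g2"
  using assms unfolding constant_on_sides_def by (meson linorder_neqE_linordered_idom)

section \<open>Flux continuity and triangle geometry\<close>

lemma perp_orthogonal: "perp u \<bullet> u = 0"
  by (simp add: perp_def inner_vec_def sum_2)

lemma perp_nonzero: "u \<noteq> 0 \<Longrightarrow> perp u \<noteq> 0"
  by (auto simp: perp_def vec_eq_iff forall_2)

lemma inner_sq_add_inner_perp_sq: "(g \<bullet> u)\<^sup>2 + (g \<bullet> perp u)\<^sup>2 = (norm g)\<^sup>2 * (norm u)\<^sup>2"
  by (simp only: power2_norm_eq_inner)
     (simp add: perp_def inner_vec_def sum_2 power2_eq_square algebra_simps)

lemma norm_gradient_le_by_flux_continuity:
  fixes g1 g2 u :: pt
  assumes "u \<noteq> 0" "g1 \<bullet> u = g2 \<bullet> u" "b1 * (g1 \<bullet> perp u) = b2 * (g2 \<bullet> perp u)"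
    and "blo \<le> b1" "b1 \<le> bhi" "blo \<le> b2" "b2 \<le> bhi" "0 < blo"
  shows "(norm g1)\<^sup>2 \<le> (bhi / blo)\<^sup>2 * (norm g2)\<^sup>2"
proof -
  define \<rho> where "\<rho> = bhi / blo"
  have "blo * \<bar>g1 \<bullet> perp u\<bar> \<le> b1 * \<bar>g1 \<bullet> perp u\<bar>"
    using assms(4) by (simp add: mult_right_mono)
  also have "\<dots> = b2 * \<bar>g2 \<bullet> perp u\<bar>"
    using assms(3,4,6,8) by (metis abs_mult abs_of_pos order_less_le_trans)
  also have "\<dots> \<le> bhi * \<bar>g2 \<bullet> perp u\<bar>"
    using assms(7) by (simp add: mult_right_mono)
  finally have "\<bar>g1 \<bullet> perp u\<bar> \<le> \<rho> * \<bar>g2 \<bullet> perp u\<bar>"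
    using assms(8) unfolding \<rho>_def by (simp add: field_simps)
  then have normal: "(g1 \<bullet> perp u)\<^sup>2 \<le> \<rho>\<^sup>2 * (g2 \<bullet> perp u)\<^sup>2"
    by (metis abs_ge_zero power2_abs power_mono power_mult_distrib)
  have "1 \<le> \<rho>"
    using assms(4,5,8) unfolding \<rho>_def by simp
  then have tangential: "(g1 \<bullet> u)\<^sup>2 \<le> \<rho>\<^sup>2 * (g2 \<bullet> u)\<^sup>2"
    using assms(2) by (simp add: mult_le_cancel_right1 one_le_power)
  have "(norm g1)\<^sup>2 * (norm u)\<^sup>2 = (g1 \<bullet> u)\<^sup>2 + (g1 \<bullet> perp u)\<^sup>2"
    by (simp add: inner_sq_add_inner_perp_sq)
  also have "\<dots> \<le> \<rho>\<^sup>2 * ((g2 \<bullet> u)\<^sup>2 + (g2 \<bullet> perp u)\<^sup>2)"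
    using normal tangential by (simp add: distrib_left)
  also have "\<dots> = (\<rho>\<^sup>2 * (norm g2)\<^sup>2) * (norm u)\<^sup>2"
    by (simp add: inner_sq_add_inner_perp_sq)
  finally show ?thesis
    using assms(1) unfolding \<rho>_def by simp
qed

lemma no_interior_line_through_two_vertices:
  fixes K :: "'a::euclidean_space set"
  assumes "card K = 3" "a \<in> K" "b \<in> K" "a \<noteq> b" "w \<noteq> 0"
    and "x \<in> interior (convex hull K)" "w \<bullet> x = k" "w \<bullet> a = k" "w \<bullet> b = k"
  shows False
proof -
  have "card (K - {a, b}) = 1"
    using assms(1-4) by (subst card_Diff_subset) auto
  then obtain c where "K - {a, b} = {c}"
    by (rule card_1_singletonE)
  then have K: "K \<subseteq> {a, b, c}"
    by blast
  consider "w \<bullet> c \<ge> k" | "w \<bullet> c \<le> k"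
    by linarith
  then show False
  proof cases
    case 1
    then have "convex hull K \<subseteq> {z. w \<bullet> z \<ge> k}"
      using K assms(8,9) by (intro hull_minimal) (auto intro: convex_halfspace_ge)
    from interior_mono[OF this] have "interior (convex hull K) \<subseteq> {z. w \<bullet> z > k}"
      using assms(5) by simp
    then show False
      using assms(6,7) by auto
  next
    case 2
    then have "convex hull K \<subseteq> {z. w \<bullet> z \<le> k}"
      using K assms(8,9) by (intro hull_minimal) (auto intro: convex_halfspace_le)
    from interior_mono[OF this] have "interior (convex hull K) \<subseteq> {z. w \<bullet> z < k}"
      using assms(5) by simp
    then show False
      using assms(6,7) by auto
  qed
qed

lemma interior_convex_hull_triangle_nonempty:
  fixes K :: "pt set"
  assumes "card K = 3" "\<not> collinear K"
  shows "interior (convex hull K) \<noteq> {}"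
proof -
  obtain a b c where K: "K = {a, b, c}"
    using assms(1) by (metis card_3_iff)
  have "(1/3) *\<^sub>R a + (1/3) *\<^sub>R b + (1/3) *\<^sub>R c \<in> interior (convex hull K)"
    using assms(2) unfolding K
    by (subst interior_convex_hull_3_minimal) (auto intro!: exI[of _ "1/3"])
  then show ?thesis
    by blast
qed

section \<open>Local structure of the space E_h\<close>

text \<open>An element not cut by the interface gets the empty cut line 0 \<bullet> x + 1 = 0.\<close>
lemma P1_local_affine_on_sides:
  assumes "P1_local K v"
  obtains g where "affine_on_sides (convex hull K) 0 1 g g v"
proof -
  obtain g c where "\<forall>x\<in>convex hull K. v x = g \<bullet> x + c"
    using assms unfolding P1_local_def by blast
  then have "affine_on_sides (convex hull K) 0 1 g g v"
    unfolding affine_on_sides_def by auto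
  then show ?thesis
    by (rule that)
qed

lemma IFE_local_affine_on_sides:
  assumes v: "IFE_local K D E b1 b2 v"
    and DE: "D \<noteq> E" "open_segment D E \<subseteq> interior (convex hull K)"
    and K: "card K = 3" "a \<in> K" "b \<in> K" "a \<noteq> b"
    and bounds: "blo \<le> b1" "b1 \<le> bhi" "blo \<le> b2" "b2 \<le> bhi" "0 < blo"
  obtains w k g1 g2 where "affine_on_sides (convex hull K) w k g1 g2 v"
    "\<not> (w \<bullet> a + k = 0 \<and> w \<bullet> b + k = 0)"
    "(norm g1)\<^sup>2 \<le> (bhi / blo)\<^sup>2 * (norm g2)\<^sup>2" "(norm g2)\<^sup>2 \<le> (bhi / blo)\<^sup>2 * (norm g1)\<^sup>2"
proof -
  define \<nu> where "\<nu> = perp (E - D)"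
  obtain g1 c1 g2 c2 where
      pos: "\<forall>x\<in>convex hull K. (x - D) \<bullet> \<nu> \<ge> 0 \<longrightarrow> v x = g1 \<bullet> x + c1"
    and neg: "\<forall>x\<in>convex hull K. (x - D) \<bullet> \<nu> \<le> 0 \<longrightarrow> v x = g2 \<bullet> x + c2"
    and continuous: "\<forall>x. (x - D) \<bullet> \<nu> = 0 \<longrightarrow> g1 \<bullet> x + c1 = g2 \<bullet> x + c2"
    and flux: "b1 * (g1 \<bullet> \<nu>) = b2 * (g2 \<bullet> \<nu>)"
    using v unfolding IFE_local_def Let_def \<nu>_def[symmetric] by blast
  have "E - D \<noteq> 0"
    using DE(1) by simp
  then have "\<nu> \<noteq> 0"
    unfolding \<nu>_def by (rule perp_nonzero)
  have ED: "(E - D) \<bullet> \<nu> = 0"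
    unfolding \<nu>_def by (metis perp_orthogonal inner_commute)
  have side: "(x - D) \<bullet> \<nu> = \<nu> \<bullet> x + - (D \<bullet> \<nu>)" for x
    by (simp add: inner_commute[of _ \<nu>] inner_diff_right)
  have tangential: "g1 \<bullet> (E - D) = g2 \<bullet> (E - D)"
    using continuous[rule_format, of D] continuous[rule_format, of E] ED
    by (simp add: inner_diff_right)
  have "\<forall>x\<in>convex hull K. (\<nu> \<bullet> x + - (D \<bullet> \<nu>) > 0 \<longrightarrow> v x = g1 \<bullet> x + c1)
      \<and> (\<nu> \<bullet> x + - (D \<bullet> \<nu>) < 0 \<longrightarrow> v x = g2 \<bullet> x + c2)"
    using pos neg unfolding side by auto
  then have "affine_on_sides (convex hull K) \<nu> (- (D \<bullet> \<nu>)) g1 g2 v"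
    unfolding affine_on_sides_def by blast
  moreover have "\<not> (\<nu> \<bullet> a + - (D \<bullet> \<nu>) = 0 \<and> \<nu> \<bullet> b + - (D \<bullet> \<nu>) = 0)"
  proof
    assume "\<nu> \<bullet> a + - (D \<bullet> \<nu>) = 0 \<and> \<nu> \<bullet> b + - (D \<bullet> \<nu>) = 0"
    then have "\<nu> \<bullet> a = D \<bullet> \<nu>" "\<nu> \<bullet> b = D \<bullet> \<nu>"
      by auto
    moreover have "midpoint D E \<in> interior (convex hull K)"
      using DE midpoint_in_open_segment by blast
    moreover have "\<nu> \<bullet> E = \<nu> \<bullet> D"
      using ED by (simp add: inner_commute[of _ \<nu>] inner_diff_right)
    then have "\<nu> \<bullet> midpoint D E = D \<bullet> \<nu>"
      by (simp add: midpoint_def inner_add_right inner_commute[of \<nu> D])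
    ultimately show False
      using no_interior_line_through_two_vertices[OF K \<open>\<nu> \<noteq> 0\<close>] by blast
  qed
  moreover have "(norm g1)\<^sup>2 \<le> (bhi / blo)\<^sup>2 * (norm g2)\<^sup>2"
    using norm_gradient_le_by_flux_continuity[OF \<open>E - D \<noteq> 0\<close> tangential flux[unfolded \<nu>_def]]
      bounds by blast
  moreover have "(norm g2)\<^sup>2 \<le> (bhi / blo)\<^sup>2 * (norm g1)\<^sup>2"
    using norm_gradient_le_by_flux_continuity[OF \<open>E - D \<noteq> 0\<close> tangential[symmetric]
        flux[unfolded \<nu>_def, symmetric]] bounds by blast
  ultimately show ?thesis
    by (rule that)
qed

lemma E_space_gradT_constant_on_sides:
  assumes mesh: "admissible_mesh \<Omega> \<Gamma> \<sigma> \<T> cutp"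
    and bc: "\<forall>K s. \<beta>lo \<le> bc K s \<and> bc K s \<le> \<beta>hi" "0 < \<beta>lo"
    and \<phi>: "\<phi> \<in> E_space \<Omega> \<Gamma> \<T> cutp bc"
    and K: "K \<in> \<T>" "a \<in> K" "b \<in> K" "a \<noteq> b"
  obtains w k g1 g2 where "constant_on_sides (convex hull K) w k g1 g2 (gradT K (\<phi> K))"
    "\<not> (w \<bullet> a + k = 0 \<and> w \<bullet> b + k = 0)"
    "(norm g1)\<^sup>2 \<le> (\<beta>hi / \<beta>lo)\<^sup>2 * (norm g2)\<^sup>2" "(norm g2)\<^sup>2 \<le> (\<beta>hi / \<beta>lo)\<^sup>2 * (norm g1)\<^sup>2"
proof -
  have "card K = 3" "\<not> collinear K"
    using mesh K unfolding admissible_mesh_def triangulation_def by auto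
  then have "finite K" "interior (convex hull K) \<noteq> {}"
    using interior_convex_hull_triangle_nonempty card.infinite by fastforce+
  obtain \<psi> c where \<psi>: "\<psi> \<in> IFE_space \<Omega> \<Gamma> \<T> cutp bc"
    and \<phi>\<psi>: "\<forall>x\<in>convex hull K. \<phi> K x = \<psi> K x + c K"
    using \<phi> K unfolding E_space_def by blast
  have "\<exists>w k g1 g2. affine_on_sides (convex hull K) w k g1 g2 (\<psi> K) \<and>
      \<not> (w \<bullet> a + k = 0 \<and> w \<bullet> b + k = 0) \<and>
      (norm g1)\<^sup>2 \<le> (\<beta>hi / \<beta>lo)\<^sup>2 * (norm g2)\<^sup>2 \<and> (norm g2)\<^sup>2 \<le> (\<beta>hi / \<beta>lo)\<^sup>2 * (norm g1)\<^sup>2"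
  proof (cases "interface_elem \<Gamma> K")
    case True
    then have "IFE_local K (fst (cutp K)) (snd (cutp K)) (bc K True) (bc K False) (\<psi> K)"
      using \<psi> K unfolding IFE_space_def by auto
    moreover have "fst (cutp K) \<noteq> snd (cutp K)"
      "open_segment (fst (cutp K)) (snd (cutp K)) \<subseteq> interior (convex hull K)"
      using mesh K True unfolding admissible_mesh_def by auto
    ultimately obtain w k g1 g2 where "affine_on_sides (convex hull K) w k g1 g2 (\<psi> K)"
      "\<not> (w \<bullet> a + k = 0 \<and> w \<bullet> b + k = 0)"
      "(norm g1)\<^sup>2 \<le> (\<beta>hi / \<beta>lo)\<^sup>2 * (norm g2)\<^sup>2" "(norm g2)\<^sup>2 \<le> (\<beta>hi / \<beta>lo)\<^sup>2 * (norm g1)\<^sup>2"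
      by (rule IFE_local_affine_on_sides[where blo = \<beta>lo and bhi = \<beta>hi, OF _ _ _ \<open>card K = 3\<close> K(2-4)])
         (use bc in auto)
    then show ?thesis
      by blast
  next
    case False
    then have "P1_local K (\<psi> K)"
      using \<psi> K unfolding IFE_space_def by auto
    then obtain g where "affine_on_sides (convex hull K) 0 1 g g (\<psi> K)"
      by (rule P1_local_affine_on_sides)
    moreover have "1 \<le> (\<beta>hi / \<beta>lo)\<^sup>2"
      using bc by (metis divide_self le_divide_eq_1_pos one_le_power order.trans)
    then have "(norm g)\<^sup>2 \<le> (\<beta>hi / \<beta>lo)\<^sup>2 * (norm g)\<^sup>2"
      by (simp add: mult_le_cancel_right1)
    ultimately show ?thesis
      by (intro exI[of _ "0::pt"] exI[of _ "1::real"] exI[of _ g] exI[of _ g]) simp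
  qed
  then obtain w k g1 g2 where sides: "affine_on_sides (convex hull K) w k g1 g2 (\<psi> K)"
    and "\<not> (w \<bullet> a + k = 0 \<and> w \<bullet> b + k = 0)"
    and "(norm g1)\<^sup>2 \<le> (\<beta>hi / \<beta>lo)\<^sup>2 * (norm g2)\<^sup>2" "(norm g2)\<^sup>2 \<le> (\<beta>hi / \<beta>lo)\<^sup>2 * (norm g1)\<^sup>2"
    by blast
  moreover have "affine_on_sides (convex hull K) w k g1 g2 (\<phi> K)"
    by (rule affine_on_sides_add_const[OF sides]) (use \<phi>\<psi> in blast)
  then have "constant_on_sides (convex hull K) w k g1 g2 (gradT K (\<phi> K))"
    using \<open>finite K\<close> \<open>interior (convex hull K) \<noteq> {}\<close> by (intro gradT_constant_on_sides)
  ultimately show ?thesis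
    by (intro that)
qed

section \<open>Edge and element integrals\<close>

lemma integral_le_spike:
  fixes f g :: "'a::euclidean_space \<Rightarrow> real"
  assumes "f integrable_on S" "g integrable_on S" "negligible N" "\<And>x. x \<in> S - N \<Longrightarrow> f x \<le> g x"
  shows "integral S f \<le> integral S g"
proof -
  define f' where "f' x = (if x \<in> N then g x else f x)" for x
  have "integral S f = integral S f'"
    by (rule integral_spike[OF assms(3)]) (simp add: f'_def)
  also have "\<dots> \<le> integral S g"
    by (rule integral_le[OF integrable_spike[OF assms(1,3)] assms(2)]) (use assms(4) in \<open>auto simp: f'_def\<close>)
  finally show ?thesis .
qed

lemma integral_const_lmeasurable:
  "S \<in> lmeasurable \<Longrightarrow> integral S (\<lambda>x::'a::euclidean_space. c) = c * measure lebesgue S"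
  using integral_cmul[of S c "\<lambda>x. 1 :: real"] by (simp add: lmeasure_integral del: integral_cmul)

lemma integral_ge_const_spike:
  fixes f :: "'a::euclidean_space \<Rightarrow> real"
  assumes "f integrable_on S" "S \<in> lmeasurable" "negligible N" "\<And>x. x \<in> S - N \<Longrightarrow> c \<le> f x"
  shows "c * measure lebesgue S \<le> integral S f"
  using integral_le_spike[OF integrable_on_const[OF assms(2)] assms(1,3,4)]
  by (simp add: integral_const_lmeasurable[OF assms(2)])

text \<open>No integrability hypothesis is needed: a non-integrable function has integral 0.\<close>
lemma integral_le_const_spike:
  fixes f :: "'a::euclidean_space \<Rightarrow> real"
  assumes "S \<in> lmeasurable" "negligible N" "\<And>x. x \<in> S - N \<Longrightarrow> f x \<le> c" "0 \<le> c"
  shows "integral S f \<le> c * measure lebesgue S"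
proof (cases "f integrable_on S")
  case True
  then show ?thesis
    using integral_le_spike[OF True integrable_on_const[OF assms(1)] assms(2,3)]
    by (simp add: integral_const_lmeasurable[OF assms(1)])
next
  case False
  then show ?thesis
    using assms(4) by (simp add: not_integrable_integral)
qed

lemma integrable_on_bounded_borel:
  fixes g :: "'a::euclidean_space \<Rightarrow> real"
  assumes "g \<in> borel_measurable borel" "S \<in> lmeasurable" "\<And>x. x \<in> S \<Longrightarrow> \<bar>g x\<bar> \<le> B"
  shows "g integrable_on S"
  by (rule measurable_bounded_by_integrable_imp_integrable_real[OF _ integrable_on_const[OF assms(2)]])
     (use assms in \<open>auto simp: measurable_completion measurable_restrict_space1\<close>)

lemma L2sq_edge_constant_on_sides_le:
  fixes G :: "pt \<Rightarrow> pt" and \<beta> :: "pt \<Rightarrow> real"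
  assumes T: "convex T" "a \<in> T" "b \<in> T" and n: "norm n = 1"
    and G: "constant_on_sides T w k g1 g2 G" and ab: "\<not> (w \<bullet> a + k = 0 \<and> w \<bullet> b + k = 0)"
    and \<beta>: "\<And>x. x \<in> T \<Longrightarrow> \<bar>\<beta> x\<bar> \<le> B"
  shows "L2sq_edge a b (\<lambda>x. \<beta> x * (G x \<bullet> n)) \<le> dist a b * (B\<^sup>2 * max ((norm g1)\<^sup>2) ((norm g2)\<^sup>2))"
proof -
  define M where "M = max ((norm g1)\<^sup>2) ((norm g2)\<^sup>2)"
  define N where "N = {t::real. (w \<bullet> (b - a)) * t = - (w \<bullet> a + k)}"
  have "negligible N"
    unfolding N_def using ab negligible_hyperplane[of "w \<bullet> (b - a)" "- (w \<bullet> a + k)"]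
    by (auto simp: inner_diff_right)
  have pointwise: "(\<beta> x * (G x \<bullet> n))\<^sup>2 \<le> B\<^sup>2 * M" if "x \<in> T" "w \<bullet> x + k \<noteq> 0" for x
  proof -
    have "(norm (G x))\<^sup>2 \<le> M"
      using G that unfolding M_def by (cases rule: constant_on_sides_cases) auto
    moreover have "(G x \<bullet> n)\<^sup>2 \<le> (norm (G x))\<^sup>2"
      using Cauchy_Schwarz_ineq2[of "G x" n] n by (metis abs_ge_zero mult_1_right power2_abs power_mono)
    moreover have "(\<beta> x)\<^sup>2 \<le> B\<^sup>2"
      using \<beta>[OF that(1)] by (metis abs_ge_zero power2_abs power_mono)
    ultimately show ?thesis
      by (simp add: power_mult_distrib mult_mono)
  qed
  have "(\<beta> (a + t *\<^sub>R (b - a)) * (G (a + t *\<^sub>R (b - a)) \<bullet> n))\<^sup>2 \<le> B\<^sup>2 * M"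
    if "t \<in> {0..1} - N" for t
  proof (rule pointwise)
    have "a + t *\<^sub>R (b - a) = (1 - t) *\<^sub>R a + t *\<^sub>R b"
      by (simp add: algebra_simps)
    then show "a + t *\<^sub>R (b - a) \<in> T"
      using T that unfolding convex_alt by auto
    show "w \<bullet> (a + t *\<^sub>R (b - a)) + k \<noteq> 0"
      using that unfolding N_def by (auto simp: inner_add_right algebra_simps)
  qed
  then have "integral {0..1} (\<lambda>t. (\<beta> (a + t *\<^sub>R (b - a)) * (G (a + t *\<^sub>R (b - a)) \<bullet> n))\<^sup>2)
      \<le> B\<^sup>2 * M * measure lebesgue {0..1::real}"
    by (intro integral_le_const_spike[OF _ \<open>negligible N\<close>]) (auto simp: M_def le_max_iff_disj)
  then show ?thesis
    unfolding L2sq_edge_def M_def[symmetric] by (simp add: mult_left_mono)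
qed

lemma integral_sq_constant_on_sides_ge:
  fixes G :: "pt \<Rightarrow> pt" and \<beta> :: "pt \<Rightarrow> real"
  assumes T: "T \<in> lmeasurable" and G: "constant_on_sides T w k g1 g2 G" and wk: "w \<noteq> 0 \<or> k \<noteq> 0"
    and \<beta>: "\<And>x. x \<in> T \<Longrightarrow> \<beta>lo \<le> \<beta> x \<and> \<beta> x \<le> \<beta>hi" "0 \<le> \<beta>lo"
    and U: "open U" "continuous_on U \<beta>" "negligible (T - U)"
  shows "\<beta>lo\<^sup>2 * min ((norm g1)\<^sup>2) ((norm g2)\<^sup>2) * measure lebesgue T
    \<le> integral T (\<lambda>x. (norm (\<beta> x *\<^sub>R G x))\<^sup>2)"
proof -
  define N where "N = {x. w \<bullet> x = - k} \<union> (T - U)"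
  have "negligible N"
    unfolding N_def using wk U(3) negligible_hyperplane[of w "- k"] by auto
  \<comment> \<open>A Borel function that agrees with the integrand off N; \<beta> itself is only continuous on U.\<close>
  define F where "F x = (indicator U x *\<^sub>R \<beta> x)\<^sup>2 * (if w \<bullet> x + k > 0 then (norm g1)\<^sup>2 else (norm g2)\<^sup>2)"
    for x
  have F: "(norm (\<beta> x *\<^sub>R G x))\<^sup>2 = F x" if "x \<in> T - N" for x
  proof -
    have "x \<in> U" "w \<bullet> x + k \<noteq> 0"
      using that unfolding N_def by auto
    then show ?thesis
      using G that unfolding F_def constant_on_sides_def by (auto simp: power_mult_distrib)
  qed
  have "F \<in> borel_measurable borel"
    unfolding F_def using borel_measurable_continuous_on_indicator[OF _ U(2)] U(1) by measurable
  moreover have "\<bar>F x\<bar> \<le> \<beta>hi\<^sup>2 * ((norm g1)\<^sup>2 + (norm g2)\<^sup>2)" if "x \<in> T" for x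
  proof -
    have "(indicator U x *\<^sub>R \<beta> x)\<^sup>2 \<le> \<beta>hi\<^sup>2"
      using \<beta>(1)[OF that] \<beta>(2) by (auto simp: indicator_def power_mono)
    then show ?thesis
      unfolding F_def by (auto simp: abs_mult intro!: mult_mono)
  qed
  ultimately have "F integrable_on T"
    by (rule integrable_on_bounded_borel[OF _ T])
  then have "(\<lambda>x. (norm (\<beta> x *\<^sub>R G x))\<^sup>2) integrable_on T"
    by (rule integrable_spike[OF _ \<open>negligible N\<close>]) (rule F)
  moreover have "\<beta>lo\<^sup>2 * min ((norm g1)\<^sup>2) ((norm g2)\<^sup>2) \<le> (norm (\<beta> x *\<^sub>R G x))\<^sup>2"
    if "x \<in> T - N" for x
  proof -
    have "\<beta>lo\<^sup>2 \<le> (\<beta> x)\<^sup>2"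
      using \<beta> that by (simp add: power_mono)
    moreover have "x \<in> T" "w \<bullet> x + k \<noteq> 0"
      using that unfolding N_def by auto
    with G have "min ((norm g1)\<^sup>2) ((norm g2)\<^sup>2) \<le> (norm (G x))\<^sup>2"
      by (cases rule: constant_on_sides_cases) auto
    ultimately show ?thesis
      by (simp add: power_mult_distrib mult_mono)
  qed
  ultimately show ?thesis
    using integral_ge_const_spike[OF _ T \<open>negligible N\<close>] by blast
qed

lemma trace_inequality_constant_on_sides:
  fixes K :: "pt set" and G :: "pt \<Rightarrow> pt" and \<beta> :: "pt \<Rightarrow> real"
  assumes K: "finite K" "a \<in> K" "b \<in> K" and n: "norm n = 1"
    and G: "constant_on_sides (convex hull K) w k g1 g2 G" and ab: "\<not> (w \<bullet> a + k = 0 \<and> w \<bullet> b + k = 0)"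
    and ratio: "(norm g1)\<^sup>2 \<le> \<rho>\<^sup>2 * (norm g2)\<^sup>2" "(norm g2)\<^sup>2 \<le> \<rho>\<^sup>2 * (norm g1)\<^sup>2"
    and \<beta>: "\<And>x. x \<in> convex hull K \<Longrightarrow> \<beta>lo \<le> \<beta> x \<and> \<beta> x \<le> \<beta>hi" "0 < \<beta>lo"
    and U: "open U" "continuous_on U \<beta>" "negligible (convex hull K - U)"
    and h: "dist a b \<le> h" "pi * (h / \<sigma>)\<^sup>2 \<le> measure lebesgue (convex hull K)" "0 < h" "0 < \<sigma>"
  shows "L2sq_edge a b (\<lambda>x. \<beta> x * (G x \<bullet> n))
    \<le> (\<sigma> * \<rho> * \<beta>hi / \<beta>lo)\<^sup>2 / pi * h powr (-1) * L2sq_elem K (\<lambda>x. \<beta> x *\<^sub>R G x)"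
proof -
  define m where "m = min ((norm g1)\<^sup>2) ((norm g2)\<^sup>2)"
  define M where "M = max ((norm g1)\<^sup>2) ((norm g2)\<^sup>2)"
  have "M \<le> \<rho>\<^sup>2 * m"
    using ratio unfolding m_def M_def by auto
  have "0 \<le> m"
    unfolding m_def by simp
  have hull: "convex hull K \<in> lmeasurable" "convex (convex hull K)"
    using K(1) by (simp_all add: finite_imp_bounded_convex_hull measurable_convex)
  have "\<bar>\<beta> x\<bar> \<le> \<beta>hi" if "x \<in> convex hull K" for x
    using \<beta>(1)[OF that] \<beta>(2) by auto
  then have "L2sq_edge a b (\<lambda>x. \<beta> x * (G x \<bullet> n)) \<le> dist a b * (\<beta>hi\<^sup>2 * M)"
    unfolding M_def using hull(2) K(2,3) n G ab
    by (intro L2sq_edge_constant_on_sides_le) (auto intro: hull_inc)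
  also have "\<dots> \<le> h * (\<beta>hi\<^sup>2 * (\<rho>\<^sup>2 * m))"
    using h(1,3) \<open>M \<le> \<rho>\<^sup>2 * m\<close> by (intro mult_mono) (auto simp: M_def le_max_iff_disj)
  also have "\<dots> = (\<sigma> * \<rho> * \<beta>hi / \<beta>lo)\<^sup>2 / pi * h powr (-1) * (\<beta>lo\<^sup>2 * m * (pi * (h / \<sigma>)\<^sup>2))"
    using h(3,4) \<beta>(2) by (simp add: powr_minus field_simps power2_eq_square)
  also have "\<dots> \<le> (\<sigma> * \<rho> * \<beta>hi / \<beta>lo)\<^sup>2 / pi * h powr (-1) * (\<beta>lo\<^sup>2 * m * measure lebesgue (convex hull K))"
    using h(2) \<open>0 \<le> m\<close> by (intro mult_left_mono) auto
  also have "\<dots> \<le> (\<sigma> * \<rho> * \<beta>hi / \<beta>lo)\<^sup>2 / pi * h powr (-1) * L2sq_elem K (\<lambda>x. \<beta> x *\<^sub>R G x)"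
    unfolding L2sq_elem_def m_def using hull(1) G ab \<beta> U
    by (intro mult_left_mono integral_sq_constant_on_sides_ge) auto
  finally show ?thesis .
qed

section \<open>Shape regularity and the interface\<close>

lemma bdd_above_inscribed_radii:
  fixes K :: "pt set"
  assumes "finite K"
  shows "bdd_above {r. \<exists>c. ball c r \<subseteq> convex hull K}"
proof -
  have "bounded (convex hull K)"
    using assms by (simp add: finite_imp_bounded_convex_hull)
  then obtain B where B: "convex hull K \<subseteq> ball 0 B"
    using bounded_subset_ballD by blast
  have "r \<le> \<bar>B\<bar>" if "ball c r \<subseteq> convex hull K" for c r
  proof -
    have "dist c 0 + r \<le> B \<or> r \<le> 0"
      using subset_trans[OF that B] by (simp add: ball_subset_ball_iff)
    then show ?thesis
      using zero_le_dist[of c 0] abs_ge_self[of B] by (elim disjE) linarith+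
  qed
  then show ?thesis
    unfolding bdd_above_def by blast
qed

lemma inradius_nonneg: "finite (K :: pt set) \<Longrightarrow> 0 \<le> inradius K"
  unfolding inradius_def by (rule cSup_upper[OF _ bdd_above_inscribed_radii]) auto

lemma inradius_ball_gt:
  assumes "finite K" "r < inradius K"
  obtains c s where "r < s" "ball c s \<subseteq> convex hull K"
proof -
  have "{r. \<exists>c. ball c r \<subseteq> convex hull K} \<noteq> {}"
    by (metis (mono_tags) ball_empty empty_iff empty_subsetI mem_Collect_eq order.refl)
  then show ?thesis
    using assms less_cSup_iff[OF _ bdd_above_inscribed_radii[OF assms(1)]] that
    unfolding inradius_def by blast
qed

lemma pi_inradius_sq_le_measure:
  fixes K :: "pt set"
  assumes "finite K"
  shows "pi * (inradius K)\<^sup>2 \<le> measure lebesgue (convex hull K)"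
proof (rule field_le_mult_one_interval)
  fix z :: real assume z: "0 < z" "z < 1"
  show "z * (pi * (inradius K)\<^sup>2) \<le> measure lebesgue (convex hull K)"
  proof (cases "inradius K = 0")
    case True
    then show ?thesis
      by simp
  next
    case False
    then have "sqrt z * inradius K < inradius K"
      using z inradius_nonneg[OF assms] by (simp add: mult_less_cancel_right1 real_sqrt_lt_1_iff)
    then obtain c s where s: "sqrt z * inradius K < s" "ball c s \<subseteq> convex hull K"
      using inradius_ball_gt[OF assms] by blast
    have "0 \<le> sqrt z * inradius K"
      using z inradius_nonneg[OF assms] by simp
    then have "0 \<le> s"
      using s(1) by linarith
    have "z * (pi * (inradius K)\<^sup>2) = pi * (sqrt z * inradius K)\<^sup>2"
      using z by (simp add: power_mult_distrib)
    also have "\<dots> \<le> pi * s\<^sup>2"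
      using s(1) z inradius_nonneg[OF assms] by (intro mult_left_mono power_mono) auto
    also have "\<dots> = measure lebesgue (ball c s)"
      using circle_area[of s c] \<open>0 \<le> s\<close> by (simp add: mult.commute)
    also have "\<dots> \<le> measure lebesgue (convex hull K)"
      using s(2) assms by (intro measure_mono_fmeasurable)
        (auto simp: finite_imp_bounded_convex_hull measurable_convex)
    finally show ?thesis .
  qed
qed

lemma dist_le_meshsize:
  assumes "triangulation \<Omega> \<T>" "K \<in> \<T>" "a \<in> K" "b \<in> K"
  shows "dist a b \<le> meshsize \<T>"
proof -
  have "finite K" "finite \<T>"
    using assms(1,2) card.infinite unfolding triangulation_def by fastforce+
  then have "dist a b \<le> diameter (convex hull K)"
    using assms(3,4) by (intro diameter_bounded_bound) (auto simp: finite_imp_bounded_convex_hull hull_inc)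
  also have "\<dots> \<le> meshsize \<T>"
    unfolding meshsize_def using \<open>finite \<T>\<close> assms(2) by simp
  finally show ?thesis .
qed

lemma admissible_mesh_measure_ge:
  assumes "admissible_mesh \<Omega> \<Gamma> \<sigma> \<T> cutp" "0 < \<sigma>" "K \<in> \<T>"
  shows "pi * (meshsize \<T> / \<sigma>)\<^sup>2 \<le> measure lebesgue (convex hull K)"
proof -
  have "finite K" "finite \<T>"
    using assms(1,3) card.infinite unfolding admissible_mesh_def triangulation_def by fastforce+
  have "0 \<le> diameter (convex hull K)"
    using \<open>finite K\<close> by (simp add: diameter_ge_0 finite_imp_bounded_convex_hull)
  also have "\<dots> \<le> meshsize \<T>"
    unfolding meshsize_def using \<open>finite \<T>\<close> assms(3) by simp
  finally have "0 \<le> meshsize \<T> / \<sigma>"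
    using assms(2) by simp
  moreover have "meshsize \<T> / \<sigma> \<le> inradius K"
    using assms unfolding admissible_mesh_def by (simp add: divide_le_eq mult.commute)
  ultimately have "pi * (meshsize \<T> / \<sigma>)\<^sup>2 \<le> pi * (inradius K)\<^sup>2"
    by (simp add: power_mono)
  also have "\<dots> \<le> measure lebesgue (convex hull K)"
    by (rule pi_inradius_sq_le_measure[OF \<open>finite K\<close>])
  finally show ?thesis .
qed

lemma C1_on_continuous_on: "C1_on S f \<Longrightarrow> continuous_on S f"
  unfolding C1_on_def by (metis continuous_at_imp_continuous_on has_derivative_continuous)

lemma negligible_C2_interface:
  assumes "C2_interface \<Omega> \<Gamma>"
  shows "negligible \<Gamma>"
proof -
  obtain \<gamma> :: "real \<Rightarrow> pt" and \<gamma>' where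
      "\<forall>t\<in>{0..1}. (\<gamma> has_vector_derivative \<gamma>' t) (at t within {0..1})" "\<Gamma> = path_image \<gamma> \<inter> \<Omega>"
    using assms unfolding C2_interface_def by blast
  moreover from this(1) have "\<gamma> differentiable_on {0..1}"
    unfolding differentiable_on_def by (meson differentiableI_vector)
  then have "negligible (\<gamma> ` {0..1})"
    by (intro negligible_differentiable_image_lowdim) auto
  ultimately show ?thesis
    unfolding path_image_def by (auto intro: negligible_subset)
qed

lemma negligible_closure_diff_subdomains:
  assumes "convex_polygonal_domain \<Omega>" "\<Omega> = \<Omega>1 \<union> \<Gamma> \<union> \<Omega>2" "C2_interface \<Omega> \<Gamma>"
  shows "negligible (closure \<Omega> - (\<Omega>1 \<union> \<Omega>2))"
proof -
  obtain P where "\<Omega> = interior (convex hull P)"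
    using assms(1) unfolding convex_polygonal_domain_def by blast
  then have "open \<Omega>" "convex \<Omega>"
    by (simp_all add: convex_interior)
  then have "closure \<Omega> - (\<Omega>1 \<union> \<Omega>2) \<subseteq> frontier \<Omega> \<union> \<Gamma>"
    using assms(2) by (auto simp: frontier_def interior_open)
  moreover have "negligible (frontier \<Omega> \<union> \<Gamma>)"
    using negligible_convex_frontier[OF \<open>convex \<Omega>\<close>] negligible_C2_interface[OF assms(3)] by simp
  ultimately show ?thesis
    by (rule negligible_subset[rotated])
qed

lemma admissible_mesh_trace_inequality:
  assumes \<beta>: "\<forall>x\<in>closure \<Omega>. \<beta>lo < \<beta> x \<and> \<beta> x < \<beta>hi" "0 < \<beta>lo"
    and U: "open U" "continuous_on U \<beta>" "negligible (closure \<Omega> - U)"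
    and mesh: "admissible_mesh \<Omega> \<Gamma> \<sigma> \<T> cutp" "0 < \<sigma>"
    and bc: "\<forall>K s. \<beta>lo \<le> bc K s \<and> bc K s \<le> \<beta>hi"
    and \<phi>: "\<phi> \<in> E_space \<Omega> \<Gamma> \<T> cutp bc"
    and K: "K \<in> \<T>" "a \<in> K" "b \<in> K" "a \<noteq> b" and n: "norm n = 1"
  shows "L2sq_edge a b (\<lambda>x. \<beta> x * (gradT K (\<phi> K) x \<bullet> n))
    \<le> (\<sigma> * (\<beta>hi / \<beta>lo) * \<beta>hi / \<beta>lo)\<^sup>2 / pi * meshsize \<T> powr (-1)
      * L2sq_elem K (\<lambda>x. \<beta> x *\<^sub>R gradT K (\<phi> K) x)"
proof -
  obtain w k g1 g2 where sides: "constant_on_sides (convex hull K) w k g1 g2 (gradT K (\<phi> K))"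
    and cut: "\<not> (w \<bullet> a + k = 0 \<and> w \<bullet> b + k = 0)"
    and ratio: "(norm g1)\<^sup>2 \<le> (\<beta>hi / \<beta>lo)\<^sup>2 * (norm g2)\<^sup>2"
      "(norm g2)\<^sup>2 \<le> (\<beta>hi / \<beta>lo)\<^sup>2 * (norm g1)\<^sup>2"
    using E_space_gradT_constant_on_sides[OF mesh(1) bc \<beta>(2) \<phi> K] by blast
  have tri: "triangulation \<Omega> \<T>"
    using mesh unfolding admissible_mesh_def by blast
  then have "card K = 3" "convex hull K \<subseteq> closure \<Omega>"
    using K(1) unfolding triangulation_def by auto
  then have "finite K"
    by (simp add: card_ge_0_finite)
  have \<beta>_hull: "\<beta>lo \<le> \<beta> x \<and> \<beta> x \<le> \<beta>hi" if "x \<in> convex hull K" for x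
    using \<beta>(1) \<open>convex hull K \<subseteq> closure \<Omega>\<close> that by (meson less_imp_le subsetD)
  have negligible: "negligible (convex hull K - U)"
    by (rule negligible_subset[OF U(3)]) (use \<open>convex hull K \<subseteq> closure \<Omega>\<close> in blast)
  have dist: "dist a b \<le> meshsize \<T>"
    using tri K(1-3) by (rule dist_le_meshsize)
  then have "0 < meshsize \<T>"
    using K(4) by (metis dist_pos_lt order_less_le_trans)
  show ?thesis
    by (rule trace_inequality_constant_on_sides[OF \<open>finite K\<close> K(2,3) n sides cut ratio \<beta>_hull \<beta>(2)
          U(1,2) negligible dist admissible_mesh_measure_ge[OF mesh(1,2) K(1)]
          \<open>0 < meshsize \<T>\<close> mesh(2)])
qed

theorem mainTheorem8:
  fixes \<Omega> \<Omega>1 \<Omega>2 \<Gamma> :: "pt set" and \<beta> :: "pt \<Rightarrow> real" and \<beta>lo \<beta>hi :: real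
  assumes "convex_polygonal_domain \<Omega>"
    and "open \<Omega>1" and "open \<Omega>2" and "\<Omega>1 \<inter> \<Omega>2 = {}" and "\<Omega>1 \<inter> \<Gamma> = {}" and "\<Omega>2 \<inter> \<Gamma> = {}"
    and "\<Omega> = \<Omega>1 \<union> \<Gamma> \<union> \<Omega>2"
    and "C2_interface \<Omega> \<Gamma>"
    and "C1_on \<Omega>1 \<beta>" and "C1_on \<Omega>2 \<beta>"
    and "0 < \<beta>lo" and "\<forall>x\<in>closure \<Omega>. \<beta>lo < \<beta> x \<and> \<beta> x < \<beta>hi"
  shows "\<forall>\<sigma>>0. \<exists>C>0. \<forall>\<T> cutp bc \<phi> K a b n.
     admissible_mesh \<Omega> \<Gamma> \<sigma> \<T> cutp \<and>
     (\<forall>K s. \<beta>lo \<le> bc K s \<and> bc K s \<le> \<beta>hi) \<and>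
     \<phi> \<in> E_space \<Omega> \<Gamma> \<T> cutp bc \<and>
     K \<in> \<T> \<and> a \<in> K \<and> b \<in> K \<and> a \<noteq> b \<and> norm n = 1 \<and> n \<bullet> (b - a) = 0 \<longrightarrow>
       L2sq_edge a b (\<lambda>x. \<beta> x * (gradT K (\<phi> K) x \<bullet> n))
         \<le> C * (meshsize \<T>) powr (-1) * L2sq_elem K (\<lambda>x. \<beta> x *\<^sub>R gradT K (\<phi> K) x)"
proof -
  obtain x0 where "x0 \<in> \<Omega>"
    using assms(1) unfolding convex_polygonal_domain_def by blast
  then have "\<beta>lo < \<beta>hi"
    using assms(12) closure_subset by fastforce
  then have C_pos: "0 < (\<sigma> * (\<beta>hi / \<beta>lo) * \<beta>hi / \<beta>lo)\<^sup>2 / pi" if "0 < \<sigma>" for \<sigma>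
    using that assms(11) by simp
  have U: "open (\<Omega>1 \<union> \<Omega>2)" "continuous_on (\<Omega>1 \<union> \<Omega>2) \<beta>"
      "negligible (closure \<Omega> - (\<Omega>1 \<union> \<Omega>2))"
    using assms(2,3,7-10) negligible_closure_diff_subdomains[OF assms(1,7,8)]
    by (auto intro: continuous_on_open_Un C1_on_continuous_on)
  show ?thesis
    using C_pos admissible_mesh_trace_inequality[OF assms(12,11) U] by blast
qed

end
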